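(* Let $\delta_1,\delta_2 \in \mathcal{D}^{LSL}$. Then for all $x,y\in[0,1]$ the star product of the lower semilinear copulas $S_{\delta_1}$ and $S_{\delta_2}$ is given by $$(S_{\delta_1}\ast S_{\delta_2})(x,y) = \begin{cases} \dfrac{x}{y^2}\delta_1(y)\delta_2(y) + xy\displaystyle\int_{[y,1]} \left(\tfrac{\delta_1(u)}{u}\right)'\left(\tfrac{\delta_2(u)}{u}\right)' \, d\lambda(u) & \text{if } y > x,\\[2ex] \dfrac{y}{x^2}\delta_1(x)\delta_2(x) + xy\displaystyle\int_{[x,1]} \left(\tfrac{\delta_1(u)}{u}\right)'\left(\tfrac{\delta_2(u)}{u}\right)' \, d\lambda(u) & \text{if } y \leq x.\end{cases}$$ In particular, $S_{\delta_1}\ast S_{\delta_2}$ is a lower semilinear copula, i.e. $S_{\delta_1}\ast S_{\delta_2}\in\mathcal{C}^{LSL}$.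
   Context: A (bivariate) copula is a distribution function on $[0,1]^2$ with uniform marginals on $[0,1]$; $\lambda$ denotes Lebesgue measure on $[0,1]$. Let $\mathcal{D}$ be the set of all functions $\delta:[0,1]\to[0,1]$ with $\delta(u)\le u$ for all $u$, $\delta(1)=1$, $\delta$ non-decreasing, and $|\delta(v)-\delta(u)|\le 2|v-u|$ for all $u,v$ (copula diagonals). Let $\mathcal{D}^{LSL}$ be the set of $\delta\in\mathcal{D}$ such that $x\mapsto \delta(x)/x$ is non-decreasing on $(0,1]$ and $x\mapsto \delta(x)/x^2$ is non-increasing on $(0,1]$. For $\delta\in\mathcal{D}^{LSL}$ define $S_\delta(x,y)= y\,\delta(x)/x$ if $y\le x$ and $S_\delta(x,y)=x\,\delta(y)/y$ otherwise (with the convention $0/0:=0$); it is known that $S_\delta$ is a copula. A copula $C$ is called lower semilinear (LSL) if for every $x\in(0,1]$ the maps $t\mapsto C(t,x)$ and $t\mapsto C(x,t)$ are linear on $[0,x]$; the set $\mathcal{C}^{LSL}$ of all LSL copulas equals $\{S_\delta:\delta\in\mathcal{D}^{LSL}\}$. The star (Markov) product of copulas $A,B$ is $(A\ast B)(x,y)=\int_{[0,1]}\partial_2A(x,s)\,\partial_1B(s,y)\,d\lambda(s)$, where $\partial_i$ is the partial derivative in the $i$-th coordinate. The derivatives $(\delta_i(u)/u)'$ exist $\lambda$-almost everywhere since the functions are Lipschitz on compact subintervals of $(0,1]$. *)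

theory Defs
  imports "HOL-Analysis.Analysis"
begin

text \<open>Bivariate copulas, represented as curried functions real => real => real;
  only their values on [0,1]^2 matter. Standard characterisation: grounded,
  uniform margins, 2-increasing on [0,1]^2.\<close>
definition is_copula :: "(real \<Rightarrow> real \<Rightarrow> real) \<Rightarrow> bool" where
  "is_copula C \<longleftrightarrow>
     (\<forall>t\<in>{0..1}. C 0 t = 0 \<and> C t 0 = 0 \<and> C 1 t = t \<and> C t 1 = t) \<and>
     (\<forall>x1\<in>{0..1}. \<forall>x2\<in>{0..1}. \<forall>y1\<in>{0..1}. \<forall>y2\<in>{0..1}.
        x1 \<le> x2 \<longrightarrow> y1 \<le> y2 \<longrightarrow> C x2 y2 - C x2 y1 - C x1 y2 + C x1 y1 \<ge> 0)"

definition diagonals :: "(real \<Rightarrow> real) set" where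
  "diagonals = {\<delta>. (\<forall>u\<in>{0..1}. 0 \<le> \<delta> u \<and> \<delta> u \<le> u) \<and> \<delta> 1 = 1 \<and>
      mono_on {0..1} \<delta> \<and>
      (\<forall>u\<in>{0..1}. \<forall>v\<in>{0..1}. \<bar>\<delta> v - \<delta> u\<bar> \<le> 2 * \<bar>v - u\<bar>)}"

definition diagonals_LSL :: "(real \<Rightarrow> real) set" where
  "diagonals_LSL = {\<delta>\<in>diagonals.
      (\<forall>x\<in>{0<..1}. \<forall>y\<in>{0<..1}. x \<le> y \<longrightarrow> \<delta> x / x \<le> \<delta> y / y) \<and>
      (\<forall>x\<in>{0<..1}. \<forall>y\<in>{0<..1}. x \<le> y \<longrightarrow> \<delta> y / y^2 \<le> \<delta> x / x^2)}"

text \<open>S_delta; Isabelle's convention x / 0 = 0 matches 0/0 := 0.\<close>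
definition S_delta :: "(real \<Rightarrow> real) \<Rightarrow> real \<Rightarrow> real \<Rightarrow> real" where
  "S_delta \<delta> x y = (if y \<le> x then y * \<delta> x / x else x * \<delta> y / y)"

definition is_LSL :: "(real \<Rightarrow> real \<Rightarrow> real) \<Rightarrow> bool" where
  "is_LSL C \<longleftrightarrow> (\<forall>x\<in>{0<..1}.
      (\<exists>a b. \<forall>t\<in>{0..x}. C t x = a * t + b) \<and>
      (\<exists>a b. \<forall>t\<in>{0..x}. C x t = a * t + b))"

definition copulas_LSL :: "(real \<Rightarrow> real \<Rightarrow> real) set" where
  "copulas_LSL = {C. is_copula C \<and> is_LSL C}"

text \<open>Star (Markov) product; partial derivatives exist a.e., and we use the
  (Lebesgue, i.e. completed) integral so values on the null set of
  non-differentiability points are irrelevant.\<close>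
definition star :: "(real \<Rightarrow> real \<Rightarrow> real) \<Rightarrow> (real \<Rightarrow> real \<Rightarrow> real) \<Rightarrow> real \<Rightarrow> real \<Rightarrow> real" where
  "star A B x y = (LINT s|lebesgue_on {0..1}. deriv (\<lambda>t. A x t) s * deriv (\<lambda>t. B t y) s)"

end

theory Submission
  imports Defs
begin

text \<open>
  For fixed x the map t \<mapsto> S_delta \<delta> x t has slope \<delta>(x)/x on (0, x) and derivative
  x (\<delta>(t)/t)' on (x, 1). For x \<le> y the integral defining the star product therefore
  splits at x and y into a constant piece, the piece x (\<delta>2(y)/y) \<integral>[x,y] (\<delta>1(s)/s)' ds,
  which telescopes, and x y \<integral>[y,1] (\<delta>1(u)/u)' (\<delta>2(u)/u)' du; the case y < x follows by
  symmetry.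
  The resulting formula is linear in the smaller argument, and the product is 2-increasing
  because both partial derivatives are almost everywhere increasing in the parameter.

  The analytic input is that \<delta>(u)/u is increasing and Lipschitz on [c, 1] for every c > 0,
  hence differentiable almost everywhere with an integrable derivative that integrates back
  to it. For this, adding the identity turns such a function into a Lipschitz increasing
  bijection G of the reals; the image of Lebesgue measure under the inverse of G has a
  Radon-Nikodym density, and a Vitali covering argument shows that this density is G'
  almost everywhere.
\<close>

section \<open>Differentiation of monotone Lipschitz functions\<close>

definition arbitrarily_short_intervals :: "real \<Rightarrow> (real \<Rightarrow> real \<Rightarrow> bool) \<Rightarrow> bool" where
  "arbitrarily_short_intervals x P \<longleftrightarrow>
     (\<forall>d>0. \<exists>c e. c \<le> x \<and> x \<le> e \<and> c < e \<and> e - c < d \<and> P c e)"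

lemma arbitrarily_short_intervals_mono:
  assumes "arbitrarily_short_intervals x P" "\<And>c e. c < e \<Longrightarrow> P c e \<Longrightarrow> Q c e"
  shows "arbitrarily_short_intervals x Q"
  using assms unfolding arbitrarily_short_intervals_def by meson

lemma has_real_derivative_from_intervals:
  fixes G :: "real \<Rightarrow> real"
  assumes "\<And>\<epsilon>. \<epsilon> > 0 \<Longrightarrow> \<exists>d>0. \<forall>c e. c \<le> x \<longrightarrow> x \<le> e \<longrightarrow> c < e \<longrightarrow> e - c < d \<longrightarrow>
              \<bar>G e - G c - D * (e - c)\<bar> \<le> \<epsilon> * (e - c)"
  shows "(G has_real_derivative D) (at x)"
  unfolding DERIV_def LIM_eq
proof (intro allI impI)
  fix r :: real assume "r > 0"
  then obtain d where "d > 0" and d: "\<And>c e. c \<le> x \<Longrightarrow> x \<le> e \<Longrightarrow> c < e \<Longrightarrow> e - c < d \<Longrightarrow>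
      \<bar>G e - G c - D * (e - c)\<bar> \<le> r / 2 * (e - c)"
    using assms[of "r / 2"] by auto
  have "\<bar>(G (x + h) - G x) / h - D\<bar> < r" if "h \<noteq> 0" "\<bar>h\<bar> < d" for h
  proof -
    have "\<bar>G (x + h) - G x - D * h\<bar> \<le> r / 2 * \<bar>h\<bar>"
    proof (cases "h > 0")
      case True
      then show ?thesis
        using d[of x "x + h"] that by simp
    next
      case False
      then have "\<bar>G x - G (x + h) - D * (x - (x + h))\<bar> \<le> r / 2 * (x - (x + h))"
        using d[of "x + h" x] that by simp
      then show ?thesis
        using False by (simp add: abs_minus_commute algebra_simps)
    qed
    moreover have "(G (x + h) - G x) / h - D = (G (x + h) - G x - D * h) / h"
      using that by (simp add: field_simps)
    ultimately have "\<bar>(G (x + h) - G x) / h - D\<bar> \<le> r / 2"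
      using that by (simp add: abs_divide divide_le_eq)
    then show ?thesis
      using \<open>r > 0\<close> by linarith
  qed
  then show "\<exists>s>0. \<forall>h. h \<noteq> 0 \<and> norm (h - 0) < s \<longrightarrow> norm ((G (x + h) - G x) / h - D) < r"
    using \<open>d > 0\<close> by auto
qed

lemma has_real_derivative_if_rational_slope_bounds:
  fixes G :: "real \<Rightarrow> real"
  assumes upper: "\<And>q. q \<in> \<rat> \<Longrightarrow> D < q \<Longrightarrow>
                    \<not> arbitrarily_short_intervals x (\<lambda>c e. q * (e - c) < G e - G c)"
    and lower: "\<And>p. p \<in> \<rat> \<Longrightarrow> p < D \<Longrightarrow>
                    \<not> arbitrarily_short_intervals x (\<lambda>c e. G e - G c < p * (e - c))"
  shows "(G has_real_derivative D) (at x)"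
proof (rule has_real_derivative_from_intervals)
  fix \<epsilon> :: real assume "\<epsilon> > 0"
  obtain q where q: "q \<in> \<rat>" "D < q" "q < D + \<epsilon>"
    using Rats_dense_in_real[of D "D + \<epsilon>"] \<open>\<epsilon> > 0\<close> by auto
  obtain p where p: "p \<in> \<rat>" "D - \<epsilon> < p" "p < D"
    using Rats_dense_in_real[of "D - \<epsilon>" D] \<open>\<epsilon> > 0\<close> by auto
  obtain d1 where "d1 > 0" and d1: "\<And>c e. c \<le> x \<Longrightarrow> x \<le> e \<Longrightarrow> c < e \<Longrightarrow> e - c < d1 \<Longrightarrow>
      G e - G c \<le> q * (e - c)"
    using upper[OF q(1,2)] unfolding arbitrarily_short_intervals_def by (meson not_less)
  obtain d2 where "d2 > 0" and d2: "\<And>c e. c \<le> x \<Longrightarrow> x \<le> e \<Longrightarrow> c < e \<Longrightarrow> e - c < d2 \<Longrightarrow>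
      p * (e - c) \<le> G e - G c"
    using lower[OF p(1,3)] unfolding arbitrarily_short_intervals_def by (meson not_less)
  have "\<bar>G e - G c - D * (e - c)\<bar> \<le> \<epsilon> * (e - c)"
    if "c \<le> x" "x \<le> e" "c < e" "e - c < min d1 d2" for c e
  proof -
    have "q * (e - c) \<le> (D + \<epsilon>) * (e - c)" "(D - \<epsilon>) * (e - c) \<le> p * (e - c)"
      using p q that by (simp_all add: mult_right_mono)
    then show ?thesis
      using d1[OF that(1-3)] d2[OF that(1-3)] that(4)
      by (simp add: abs_le_iff algebra_simps)
  qed
  then show "\<exists>d>0. \<forall>c e. c \<le> x \<longrightarrow> x \<le> e \<longrightarrow> c < e \<longrightarrow> e - c < d \<longrightarrow>
              \<bar>G e - G c - D * (e - c)\<bar> \<le> \<epsilon> * (e - c)"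
    using \<open>d1 > 0\<close> \<open>d2 > 0\<close> by (intro exI[of _ "min d1 d2"]) auto
qed

lemma has_real_derivative_nonneg_if_increasing_right:
  fixes f :: "real \<Rightarrow> real"
  assumes D: "(f has_real_derivative D) (at x)" and "e > 0"
    and mono: "\<And>y. x < y \<Longrightarrow> y < x + e \<Longrightarrow> f x \<le> f y"
  shows "0 \<le> D"
proof -
  have "((\<lambda>h. (f (x + h) - f x) / h) \<longlongrightarrow> D) (at_right 0)"
    using D unfolding DERIV_def by (rule tendsto_mono[rotated]) (simp add: at_le)
  moreover have "eventually (\<lambda>h. 0 \<le> (f (x + h) - f x) / h) (at_right 0)"
    unfolding eventually_at_right_field using \<open>e > 0\<close> mono by (intro exI[of _ e]) auto
  ultimately show ?thesis
    by (rule tendsto_lowerbound) simp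
qed

lemma has_real_derivative_nonpos_if_decreasing_right:
  fixes f :: "real \<Rightarrow> real"
  assumes "(f has_real_derivative D) (at x)" "e > 0"
    and "\<And>y. x < y \<Longrightarrow> y < x + e \<Longrightarrow> f y \<le> f x"
  shows "D \<le> 0"
  using has_real_derivative_nonneg_if_increasing_right[OF DERIV_minus[OF assms(1)] assms(2)] assms(3)
  by force

lemma has_real_derivative_abs_le_if_Lipschitz:
  fixes f :: "real \<Rightarrow> real"
  assumes D: "(f has_real_derivative D) (at x)" and "e > 0"
    and lip: "\<And>y. \<bar>y - x\<bar> < e \<Longrightarrow> \<bar>f y - f x\<bar> \<le> L * \<bar>y - x\<bar>"
  shows "\<bar>D\<bar> \<le> L"
proof -
  have "((\<lambda>h. \<bar>(f (x + h) - f x) / h\<bar>) \<longlongrightarrow> \<bar>D\<bar>) (at 0)"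
    using D unfolding DERIV_def by (rule tendsto_rabs)
  moreover have "\<bar>(f (x + h) - f x) / h\<bar> \<le> L" if "h \<noteq> 0" "dist h 0 < e" for h
    using lip[of "x + h"] that by (simp add: abs_divide divide_le_eq dist_real_def)
  then have "eventually (\<lambda>h. \<bar>(f (x + h) - f x) / h\<bar> \<le> L) (at 0)"
    unfolding eventually_at using \<open>e > 0\<close> by blast
  ultimately show ?thesis
    by (rule tendsto_upperbound) simp
qed

lemma has_real_derivative_mono_Lipschitz_bounds:
  fixes f :: "real \<Rightarrow> real"
  assumes D: "(f has_real_derivative D) (at x)" and x: "x \<in> {a<..<b}" and mono: "mono_on {a..b} f"
    and lip: "\<And>x y. x \<in> {a..b} \<Longrightarrow> y \<in> {a..b} \<Longrightarrow> \<bar>f y - f x\<bar> \<le> L * \<bar>y - x\<bar>"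
  shows "0 \<le> D \<and> D \<le> L"
proof -
  define e where "e = min (x - a) (b - x)"
  have "e > 0"
    using x by (simp add: e_def)
  have "0 \<le> D"
    by (rule has_real_derivative_nonneg_if_increasing_right[OF D \<open>e > 0\<close>])
       (use x in \<open>auto simp: e_def intro!: mono_onD[OF mono]\<close>)
  moreover have "\<bar>D\<bar> \<le> L"
    by (rule has_real_derivative_abs_le_if_Lipschitz[OF D \<open>e > 0\<close>])
       (use x in \<open>auto simp: e_def intro!: lip\<close>)
  ultimately show ?thesis
    by simp
qed

lemma negligible_if_small_cover:
  fixes Z :: "real set"
  assumes "\<And>\<eta>. \<eta> > 0 \<Longrightarrow> \<exists>W. W \<in> sets borel \<and> emeasure lborel W \<le> ennreal \<eta> \<and> negligible (Z - W)"
  shows "negligible Z"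
  unfolding negligible_outer_le
proof (intro allI impI)
  fix \<eta> :: real assume "\<eta> > 0"
  then obtain W where W: "W \<in> sets borel" "emeasure lborel W \<le> ennreal \<eta>" "negligible (Z - W)"
    using assms by blast
  have N: "Z - W \<in> null_sets lebesgue"
    using W(3) by (simp add: negligible_iff_null_sets)
  have WL: "W \<in> lmeasurable" "measure lebesgue W \<le> \<eta>"
    using W(1,2) \<open>\<eta> > 0\<close>
    by (auto intro!: fmeasurableI le_less_trans[OF _ ennreal_less_top] enn2real_leI
             simp: emeasure_completion measure_def)
  have "emeasure lebesgue (W \<union> (Z - W)) = emeasure lebesgue W"
    by (rule emeasure_Un_null_set) (use WL N in auto)
  moreover have "W \<union> (Z - W) \<in> sets lebesgue"
    using WL N by (intro sets.Un) auto
  moreover have "measure lebesgue (W \<union> (Z - W)) = measure lebesgue W"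
    by (rule measure_Un_null_set) (use WL N in auto)
  ultimately show "\<exists>T. Z \<subseteq> T \<and> T \<in> lmeasurable \<and> measure lebesgue T \<le> \<eta>"
    using WL by (intro exI[of _ "W \<union> (Z - W)"]) (auto intro: fmeasurableI simp: fmeasurable_def)
qed

lemma negligible_if_negligible_on_bounded:
  fixes Z :: "real set"
  assumes "\<And>n::nat. negligible (Z \<inter> {-real n<..<real n})"
  shows "negligible Z"
proof -
  have "\<exists>n::nat. x \<in> {-real n<..<real n}" for x
  proof -
    obtain n :: nat where "\<bar>x\<bar> < real n"
      using reals_Archimedean2 by blast
    then show ?thesis
      by (intro exI[of _ n]) auto
  qed
  then have "Z \<subseteq> (\<Union>n. Z \<inter> {-real n<..<real n})"
    by blast
  then show ?thesis
    by (rule negligible_subset[OF negligible_Union_nat[OF assms]])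
qed

lemma negligible_AE_exceptions:
  assumes "AE x in lebesgue. P x"
  shows "negligible {x. \<not> P x}"
proof -
  from assms obtain N where N: "{x \<in> space lebesgue. \<not> P x} \<subseteq> N" "emeasure lebesgue N = 0"
      "N \<in> sets lebesgue"
    by (rule AE_E)
  then have "negligible N"
    by (simp add: negligible_iff_null_sets null_setsI)
  then show ?thesis
    using N(1) by (auto intro: negligible_subset)
qed

lemma emeasure_lborel_Icc_subset_finite:
  assumes "A \<subseteq> {a..b::real}"
  shows "emeasure lborel A \<noteq> \<infinity>"
proof -
  have "bounded A"
    using bounded_closed_interval assms by (rule bounded_subset)
  then show ?thesis
    using emeasure_bounded_finite by force
qed

lemma Vitali_covering_intervals:
  fixes S U :: "real set"
  assumes "open U" "S \<subseteq> U" and fine: "\<And>x. x \<in> S \<Longrightarrow> arbitrarily_short_intervals x P"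
  obtains C where "countable C"
    "\<And>i. i \<in> C \<Longrightarrow> fst i < snd i \<and> {fst i..snd i} \<subseteq> U \<and> P (fst i) (snd i)"
    "disjoint_family_on (\<lambda>i. {fst i..snd i}) C" "negligible (S - (\<Union>i\<in>C. {fst i..snd i}))"
proof -
  define K where "K = {i. fst i < snd i \<and> {fst i..snd i} \<subseteq> U \<and> P (fst i) (snd i)}"
  define mid where "mid i = (fst i + snd i) / 2" for i :: "real \<times> real"
  define rad where "rad i = (snd i - fst i) / 2" for i :: "real \<times> real"
  have cball_eq: "cball (mid i) (rad i) = {fst i..snd i}" for i
    by (auto simp: mid_def rad_def cball_eq_atLeastAtMost field_simps)
  have cover: "\<exists>i. i \<in> K \<and> x \<in> cball (mid i) (rad i) \<and> rad i < d" if "x \<in> S" "d > 0" for x d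
  proof -
    obtain \<rho> where \<rho>: "\<rho> > 0" "ball x \<rho> \<subseteq> U"
      using assms(1,2) \<open>x \<in> S\<close> openE by blast
    obtain c e where ce: "c \<le> x" "x \<le> e" "c < e" "e - c < min d \<rho>" "P c e"
      using fine[OF \<open>x \<in> S\<close>] \<rho> \<open>d > 0\<close> unfolding arbitrarily_short_intervals_def
      by (meson min_less_iff_conj)
    then have "{c..e} \<subseteq> ball x \<rho>"
      by (auto simp: dist_real_def)
    moreover have "x \<in> cball (mid (c, e)) (rad (c, e))"
      using ce by (simp add: cball_eq)
    ultimately show ?thesis
      using ce \<rho> by (intro exI[of _ "(c, e)"]) (auto simp: K_def rad_def)
  qed
  obtain C where C: "countable C" "C \<subseteq> K"
      "pairwise (\<lambda>i j. disjnt (cball (mid i) (rad i)) (cball (mid j) (rad j))) C"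
      "negligible (S - (\<Union>i\<in>C. cball (mid i) (rad i)))"
    by (rule Vitali_covering_theorem_cballs[where K=K and a=mid and r=rad, OF _ cover])
       (simp_all add: K_def rad_def)
  show ?thesis
  proof (rule that[OF C(1)])
    show "\<And>i. i \<in> C \<Longrightarrow> fst i < snd i \<and> {fst i..snd i} \<subseteq> U \<and> P (fst i) (snd i)"
      using C(2) by (auto simp: K_def)
    show "disjoint_family_on (\<lambda>i. {fst i..snd i}) C"
      using C(3) by (auto simp: cball_eq pairwise_def disjnt_def disjoint_family_on_def)
    show "negligible (S - (\<Union>i\<in>C. {fst i..snd i}))"
      using C(4) by (simp add: cball_eq)
  qed
qed

lemma emeasure_disjoint_UN_compare:
  assumes "sets \<alpha> = sets \<beta>" "countable I" "\<And>i. i \<in> I \<Longrightarrow> A i \<in> sets \<alpha>"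
    and "disjoint_family_on A I"
    and le: "\<And>i. i \<in> I \<Longrightarrow> c * emeasure \<beta> (A i) \<le> emeasure \<alpha> (A i)"
  shows "c * emeasure \<beta> (\<Union>i\<in>I. A i) \<le> emeasure \<alpha> (\<Union>i\<in>I. A i)"
proof -
  have "c * emeasure \<beta> (\<Union>i\<in>I. A i) = (\<integral>\<^sup>+i. c * emeasure \<beta> (A i) \<partial>count_space I)"
    using assms(1-4) by (simp add: emeasure_UN_countable nn_integral_cmult)
  also have "\<dots> \<le> (\<integral>\<^sup>+i. emeasure \<alpha> (A i) \<partial>count_space I)"
    using le by (intro nn_integral_mono) auto
  also have "\<dots> = emeasure \<alpha> (\<Union>i\<in>I. A i)"
    using assms(1-4) by (simp add: emeasure_UN_countable)
  finally show ?thesis .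
qed

lemma Vitali_interval_cover_compare:
  fixes \<alpha> \<beta> :: "real measure"
  assumes sets: "sets \<alpha> = sets borel" "sets \<beta> = sets borel" and "open V" "Z \<subseteq> V"
    and "\<And>x. x \<in> Z \<Longrightarrow> arbitrarily_short_intervals x (\<lambda>c e. r * emeasure \<beta> {c..e} < emeasure \<alpha> {c..e})"
  obtains W where "W \<in> sets borel" "W \<subseteq> V" "negligible (Z - W)" "r * emeasure \<beta> W \<le> emeasure \<alpha> W"
proof -
  obtain C where C: "countable C"
      "\<And>i. i \<in> C \<Longrightarrow> fst i < snd i \<and> {fst i..snd i} \<subseteq> V \<and>
              r * emeasure \<beta> {fst i..snd i} < emeasure \<alpha> {fst i..snd i}"
      "disjoint_family_on (\<lambda>i. {fst i..snd i}) C" "negligible (Z - (\<Union>i\<in>C. {fst i..snd i}))"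
    by (rule Vitali_covering_intervals[OF assms(3,4,5)]) auto
  show ?thesis
  proof (rule that)
    show "r * emeasure \<beta> (\<Union>i\<in>C. {fst i..snd i}) \<le> emeasure \<alpha> (\<Union>i\<in>C. {fst i..snd i})"
      by (rule emeasure_disjoint_UN_compare) (use sets C in \<open>auto intro: less_imp_le\<close>)
  qed (use C in auto)
qed

text \<open>
  Used with (\<alpha>, \<beta>) = (G_measure, lborel) for the upper and with (lborel, G_measure) for the
  lower derivates of G.
\<close>

lemma Vitali_density_estimate:
  fixes \<alpha> \<beta> :: "real measure"
  assumes sets: "sets \<alpha> = sets borel" "sets \<beta> = sets borel"
    and finite: "\<And>A. A \<in> sets borel \<Longrightarrow> A \<subseteq> {a..b} \<Longrightarrow> emeasure \<alpha> A \<noteq> \<infinity> \<and> emeasure \<beta> A \<noteq> \<infinity>"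
    and B: "B \<in> sets borel" "B \<subseteq> {a<..<b}"
    and outer: "\<And>\<epsilon>. \<epsilon> > 0 \<Longrightarrow> \<exists>U. open U \<and> B \<subseteq> U \<and> emeasure \<alpha> (U - B) < ennreal \<epsilon>"
    and dominated: "\<And>A. A \<in> sets borel \<Longrightarrow> A \<subseteq> B \<Longrightarrow> emeasure \<alpha> A \<le> ennreal p * emeasure \<beta> A"
    and pq: "0 \<le> p" "p < q"
    and Z: "Z \<subseteq> B"
      "\<And>x. x \<in> Z \<Longrightarrow>
        arbitrarily_short_intervals x (\<lambda>c e. ennreal q * emeasure \<beta> {c..e} < emeasure \<alpha> {c..e})"
    and "\<eta> > 0"
  obtains W where "W \<in> sets borel" "W \<subseteq> {a..b}" "measure \<beta> W \<le> \<eta>" "negligible (Z - W)"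
proof -
  obtain U where U: "open U" "B \<subseteq> U" "emeasure \<alpha> (U - B) < ennreal ((q - p) * \<eta>)"
    using outer[of "(q - p) * \<eta>"] pq \<open>\<eta> > 0\<close> by auto
  define V where "V = U \<inter> {a<..<b}"
  have V: "open V" "Z \<subseteq> V" "V \<subseteq> {a..b}"
    using U B Z by (auto simp: V_def)
  obtain W where W: "W \<in> sets borel" "W \<subseteq> V" "negligible (Z - W)"
      "ennreal q * emeasure \<beta> W \<le> emeasure \<alpha> W"
    by (rule Vitali_interval_cover_compare[OF sets V(1,2) Z(2)]) auto
  note W(4)
  also have "\<dots> \<le> emeasure \<alpha> ((W \<inter> B) \<union> (V - B))"
    using W B V U sets by (intro emeasure_mono) auto
  also have "\<dots> \<le> emeasure \<alpha> (W \<inter> B) + emeasure \<alpha> (V - B)"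
    using W B V sets by (intro emeasure_subadditive) auto
  also have "\<dots> \<le> ennreal p * emeasure \<beta> W + ennreal ((q - p) * \<eta>)"
  proof (intro add_mono)
    have "emeasure \<alpha> (W \<inter> B) \<le> ennreal p * emeasure \<beta> (W \<inter> B)"
      using W B by (intro dominated) auto
    also have "\<dots> \<le> ennreal p * emeasure \<beta> W"
      using W B sets by (intro mult_left_mono emeasure_mono) auto
    finally show "emeasure \<alpha> (W \<inter> B) \<le> ennreal p * emeasure \<beta> W" .
    have "emeasure \<alpha> (V - B) \<le> emeasure \<alpha> (U - B)"
      using U B sets by (intro emeasure_mono) (auto simp: V_def)
    then show "emeasure \<alpha> (V - B) \<le> ennreal ((q - p) * \<eta>)"
      using U(3) by simp
  qed
  finally have "q * measure \<beta> W \<le> p * measure \<beta> W + (q - p) * \<eta>"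
    using finite[of W] W V pq \<open>\<eta> > 0\<close>
    by (simp add: emeasure_eq_ennreal_measure ennreal_mult'[symmetric] ennreal_plus[symmetric]
        del: ennreal_plus)
  then have "(q - p) * measure \<beta> W \<le> (q - p) * \<eta>"
    by (simp add: algebra_simps)
  then have "measure \<beta> W \<le> \<eta>"
    using pq by simp
  then show ?thesis
    using that W V by auto
qed

locale Lipschitz_increasing_bijection =
  fixes G :: "real \<Rightarrow> real" and M :: real
  assumes strict_mono: "strict_mono G"
    and lipschitz: "\<And>x y. \<bar>G y - G x\<bar> \<le> M * \<bar>y - x\<bar>"
    and surj: "surj G"

begin

lemma G_inv [simp]: "G (inv G y) = y"
  using surj by (simp add: surj_f_inv_f)

lemma inv_G [simp]: "inv G (G x) = x"
  using strict_mono by (simp add: strict_mono_imp_inj_on)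

lemma G_le_iff [simp]: "G x \<le> G y \<longleftrightarrow> x \<le> y"
  using strict_mono by (simp add: strict_mono_less_eq)

lemma G_less_iff [simp]: "G x < G y \<longleftrightarrow> x < y"
  using strict_mono by (simp add: strict_mono_less)

lemma inv_G_measurable [measurable]: "inv G \<in> borel_measurable borel"
  by (rule borel_measurable_mono) (metis G_inv G_le_iff monoI)

lemma image_eq_vimage_inv: "G ` A = inv G -` A"
  by (auto simp: image_iff) (metis G_inv)

lemma image_borel: "A \<in> sets borel \<Longrightarrow> G ` A \<in> sets borel"
  unfolding image_eq_vimage_inv by (rule measurable_sets_borel[OF inv_G_measurable])

lemma G_inj: "inj G"
  using strict_mono by (rule strict_mono_imp_inj_on)

lemma Lipschitz_constant_nonneg: "0 \<le> M"
proof -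
  have "G 0 < G 1" "\<bar>G 1 - G 0\<bar> \<le> M"
    using lipschitz[of 0 1] by simp_all
  then show ?thesis
    by linarith
qed

lemma G_continuous: "continuous_on UNIV G"
  by (rule lipschitz_on_continuous_on[of M])
     (auto intro!: lipschitz_onI simp: dist_real_def lipschitz Lipschitz_constant_nonneg)

definition G_measure :: "real measure" where
  "G_measure = distr lborel borel (inv G)"

lemma sets_G_measure [simp, measurable_cong]: "sets G_measure = sets borel"
  by (simp add: G_measure_def)

lemma space_G_measure [simp]: "space G_measure = UNIV"
  by (simp add: G_measure_def)

lemma emeasure_G_measure: "A \<in> sets borel \<Longrightarrow> emeasure G_measure A = emeasure lborel (G ` A)"
  unfolding G_measure_def by (simp add: emeasure_distr image_eq_vimage_inv)

lemma image_Icc: "G ` {c..e} = {G c..G e}"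
proof
  show "{G c..G e} \<subseteq> G ` {c..e}"
  proof
    fix y assume "y \<in> {G c..G e}"
    then have "inv G y \<in> {c..e}"
      by (metis G_inv G_le_iff atLeastAtMost_iff)
    then show "y \<in> G ` {c..e}"
      by (metis G_inv imageI)
  qed
qed auto

lemma emeasure_G_measure_Icc: "c \<le> e \<Longrightarrow> emeasure G_measure {c..e} = ennreal (G e - G c)"
  by (simp add: emeasure_G_measure image_Icc)

lemma emeasure_G_measure_bounded_finite:
  assumes "A \<in> sets borel" "A \<subseteq> {a..b}"
  shows "emeasure G_measure A \<noteq> \<infinity>"
proof (cases "a \<le> b")
  case True
  have "emeasure G_measure A \<le> emeasure G_measure {a..b}"
    using assms by (intro emeasure_mono) auto
  then show ?thesis
    using True by (auto simp: emeasure_G_measure_Icc top_unique)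
next
  case False
  then show ?thesis
    using assms by auto
qed

lemma G_measure_outer_approx:
  assumes "B \<in> sets borel" "\<epsilon> > 0"
  shows "\<exists>U. open U \<and> B \<subseteq> U \<and> emeasure G_measure (U - B) < ennreal \<epsilon>"
proof -
  obtain V where V: "open V" "G ` B \<subseteq> V" "emeasure lborel (V - G ` B) < \<epsilon>"
    using outer_regular_lborel[OF image_borel[OF assms(1)] assms(2)] by blast
  have "open (G -` V)"
    using G_continuous V(1) by (simp add: open_vimage)
  moreover have "G ` (G -` V - B) = V - G ` B"
    using surj by (simp add: image_set_diff[OF G_inj] image_vimage_eq)
  then have "emeasure G_measure (G -` V - B) = emeasure lborel (V - G ` B)"
    using assms(1) \<open>open (G -` V)\<close> by (simp add: emeasure_G_measure)
  ultimately show ?thesis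
    using V by (intro exI[of _ "G -` V"]) auto
qed

lemma G_measure_absolutely_continuous: "absolutely_continuous lborel G_measure"
  unfolding absolutely_continuous_def
proof
  fix A :: "real set" assume A: "A \<in> null_sets lborel"
  then have "negligible A"
    by (simp add: negligible_iff_null_sets null_sets_completionI)
  then have "negligible (G ` A)"
    by (rule negligible_locally_Lipschitz_image[of A G, simplified])
       (metis lipschitz open_UNIV UNIV_I real_norm_def)
  then have "G ` A \<in> null_sets lborel"
    using image_borel[of A] A by (auto simp: negligible_iff_null_sets null_sets_completion_iff)
  then show "A \<in> null_sets G_measure"
    using A by (simp add: null_sets_def emeasure_G_measure)
qed

lemma G_measure_sigma_finite: "sigma_finite_measure G_measure"
proof
  have "\<exists>n::nat. x \<in> {-real n..real n}" for x
  proof -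
    obtain n :: nat where "\<bar>x\<bar> \<le> real n"
      using real_arch_simple by blast
    then show ?thesis
      by (intro exI[of _ n]) auto
  qed
  then show "\<exists>A. countable A \<and> A \<subseteq> sets G_measure \<and> \<Union> A = space G_measure \<and>
      (\<forall>a\<in>A. emeasure G_measure a \<noteq> \<infinity>)"
    by (intro exI[of _ "range (\<lambda>n::nat. {-real n..real n})"]) (auto simp: emeasure_G_measure_Icc)
qed

definition G_density :: "real \<Rightarrow> real" where
  "G_density x = enn2real (RN_deriv lborel G_measure x)"

lemma G_density_measurable [measurable]: "G_density \<in> borel_measurable borel"
  unfolding G_density_def by measurable

lemma G_density_nonneg: "0 \<le> G_density x"
  by (simp add: G_density_def)

lemma G_measure_eq_density: "density lborel (\<lambda>x. ennreal (G_density x)) = G_measure"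
proof -
  have "AE x in lborel. RN_deriv lborel G_measure x \<noteq> \<infinity>"
    by (rule sigma_finite_measure.RN_deriv_finite[OF sigma_finite_lborel G_measure_sigma_finite
          G_measure_absolutely_continuous]) simp
  then have "density lborel (\<lambda>x. ennreal (G_density x)) = density lborel (RN_deriv lborel G_measure)"
    by (intro density_cong) (auto simp: G_density_def ennreal_enn2real_if elim!: eventually_mono)
  also have "\<dots> = G_measure"
    by (rule sigma_finite_measure.density_RN_deriv[OF sigma_finite_lborel
          G_measure_absolutely_continuous])
       simp
  finally show ?thesis .
qed

lemma emeasure_G_measure_density:
  "A \<in> sets borel \<Longrightarrow> emeasure G_measure A = (\<integral>\<^sup>+x. ennreal (G_density x) * indicator A x \<partial>lborel)"
  by (subst G_measure_eq_density[symmetric]) (simp add: emeasure_density)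

lemma G_density_has_integral: "c \<le> e \<Longrightarrow> (G_density has_integral (G e - G c)) {c..e}"
proof -
  assume "c \<le> e"
  have "(\<integral>\<^sup>+x. ennreal (G_density x * indicator {c..e} x) \<partial>lborel) = emeasure G_measure {c..e}"
    by (subst emeasure_G_measure_density) (auto intro!: nn_integral_cong simp: indicator_def)
  also have "\<dots> = ennreal (G e - G c)"
    using \<open>c \<le> e\<close> by (simp add: emeasure_G_measure_Icc)
  finally have "((\<lambda>x. G_density x * indicator {c..e} x) has_integral (G e - G c)) UNIV"
    using \<open>c \<le> e\<close> by (intro nn_integral_has_integral) (auto simp: G_density_nonneg)
  then show ?thesis
    by (simp add: has_integral_restrict_UNIV[symmetric, of _ _ "{c..e}"] indicator_def of_bool_def
        if_distrib cong: if_cong)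
qed

lemma emeasure_G_measure_le:
  assumes "A \<in> sets borel" "\<And>x. x \<in> A \<Longrightarrow> G_density x \<le> p"
  shows "emeasure G_measure A \<le> ennreal p * emeasure lborel A"
proof -
  have "emeasure G_measure A \<le> (\<integral>\<^sup>+x. ennreal p * indicator A x \<partial>lborel)"
    using assms by (auto simp: emeasure_G_measure_density intro!: nn_integral_mono ennreal_leI
                         split: split_indicator)
  then show ?thesis
    using assms by (simp add: nn_integral_cmult_indicator)
qed

lemma emeasure_G_measure_ge:
  assumes "A \<in> sets borel" "\<And>x. x \<in> A \<Longrightarrow> q \<le> G_density x"
  shows "ennreal q * emeasure lborel A \<le> emeasure G_measure A"
proof -
  have "(\<integral>\<^sup>+x. ennreal q * indicator A x \<partial>lborel) \<le> emeasure G_measure A"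
    using assms by (auto simp: emeasure_G_measure_density intro!: nn_integral_mono ennreal_leI
                         split: split_indicator)
  then show ?thesis
    using assms by (simp add: nn_integral_cmult_indicator)
qed

lemma measure_G_measure_ge:
  assumes "A \<in> sets borel" "A \<subseteq> {a..b}" "0 \<le> q" "\<And>x. x \<in> A \<Longrightarrow> q \<le> G_density x"
  shows "q * measure lborel A \<le> measure G_measure A"
proof -
  have "ennreal (q * measure lborel A) = ennreal q * emeasure lborel A"
    using assms emeasure_lborel_Icc_subset_finite[of A]
    by (simp add: emeasure_eq_ennreal_measure ennreal_mult')
  also have "\<dots> \<le> emeasure G_measure A"
    using assms by (intro emeasure_G_measure_ge) auto
  also have "\<dots> = ennreal (measure G_measure A)"
    using emeasure_G_measure_bounded_finite[OF assms(1,2)] by (simp add: emeasure_eq_ennreal_measure)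
  finally show ?thesis
    by (rule ennreal_le_iff[THEN iffD1, OF measure_nonneg])
qed

lemma upper_derivate_set_small_cover:
  assumes "0 \<le> p" "p < q" "\<eta> > 0"
  defines "Z \<equiv> {x. G_density x < p \<and> arbitrarily_short_intervals x (\<lambda>c e. q * (e - c) < G e - G c)}"
  shows "\<exists>W. W \<in> sets borel \<and> emeasure lborel W \<le> ennreal \<eta> \<and> negligible (Z \<inter> {a<..<b} - W)"
proof -
  define B where "B = {x \<in> {a<..<b}. G_density x < p}"
  have B: "B \<in> sets borel" "B \<subseteq> {a<..<b}"
    by (auto simp: B_def)
  obtain W where W: "W \<in> sets borel" "W \<subseteq> {a..b}" "measure lborel W \<le> \<eta>"
      "negligible (Z \<inter> {a<..<b} - W)"
  proof (rule Vitali_density_estimate[where \<alpha>=G_measure and \<beta>=lborel and B=B and p=p and q=q and \<eta>=\<eta>])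
    show "emeasure G_measure A \<noteq> \<infinity> \<and> emeasure lborel A \<noteq> \<infinity>" if "A \<in> sets borel" "A \<subseteq> {a..b}" for A
      using that emeasure_G_measure_bounded_finite emeasure_lborel_Icc_subset_finite by blast
    show "\<exists>U. open U \<and> B \<subseteq> U \<and> emeasure G_measure (U - B) < ennreal \<epsilon>" if "\<epsilon> > 0" for \<epsilon>
      using G_measure_outer_approx[OF B(1) that] .
    show "emeasure G_measure A \<le> ennreal p * emeasure lborel A" if "A \<in> sets borel" "A \<subseteq> B" for A
      using that by (intro emeasure_G_measure_le) (auto simp: B_def)
    show "arbitrarily_short_intervals x
            (\<lambda>c e. ennreal q * emeasure lborel {c..e} < emeasure G_measure {c..e})"
      if "x \<in> Z \<inter> {a<..<b}" for x
      using that assms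
      by (auto elim!: arbitrarily_short_intervals_mono
               simp: emeasure_G_measure_Icc ennreal_mult'[symmetric] ennreal_lessI)
  qed (use B assms in \<open>auto simp: B_def\<close>)
  then show ?thesis
    using emeasure_lborel_Icc_subset_finite[OF W(2)]
    by (intro exI[of _ W]) (auto simp: emeasure_eq_ennreal_measure ennreal_leI)
qed

lemma lower_derivate_set_small_cover:
  assumes "0 < p" "p < q" "\<eta> > 0"
  defines "Z \<equiv> {x. q < G_density x \<and> arbitrarily_short_intervals x (\<lambda>c e. G e - G c < p * (e - c))}"
  shows "\<exists>W. W \<in> sets borel \<and> emeasure lborel W \<le> ennreal \<eta> \<and> negligible (Z \<inter> {a<..<b} - W)"
proof -
  define B where "B = {x \<in> {a<..<b}. q < G_density x}"
  have B: "B \<in> sets borel" "B \<subseteq> {a<..<b}"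
    by (auto simp: B_def)
  obtain W where W: "W \<in> sets borel" "W \<subseteq> {a..b}" "measure G_measure W \<le> q * \<eta>"
      "negligible (Z \<inter> {a<..<b} - W)"
  proof (rule Vitali_density_estimate[where \<alpha>=lborel and \<beta>=G_measure and B=B and p="1 / q" and q="1 / p"
        and \<eta>="q * \<eta>"])
    show "emeasure lborel A \<noteq> \<infinity> \<and> emeasure G_measure A \<noteq> \<infinity>" if "A \<in> sets borel" "A \<subseteq> {a..b}" for A
      using that emeasure_G_measure_bounded_finite emeasure_lborel_Icc_subset_finite by blast
    show "\<exists>U. open U \<and> B \<subseteq> U \<and> emeasure lborel (U - B) < ennreal \<epsilon>" if "\<epsilon> > 0" for \<epsilon>
      using outer_regular_lborel[OF B(1) that] by blast
    show "emeasure lborel A \<le> ennreal (1 / q) * emeasure G_measure A" if "A \<in> sets borel" "A \<subseteq> B" for A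
    proof -
      have "emeasure lborel A = ennreal (1 / q) * (ennreal q * emeasure lborel A)"
        using assms by (simp add: mult.assoc[symmetric] ennreal_mult'[symmetric])
      also have "\<dots> \<le> ennreal (1 / q) * emeasure G_measure A"
        using that by (intro mult_left_mono emeasure_G_measure_ge) (auto simp: B_def)
      finally show ?thesis .
    qed
    show "arbitrarily_short_intervals x
            (\<lambda>c e. ennreal (1 / p) * emeasure G_measure {c..e} < emeasure lborel {c..e})"
      if "x \<in> Z \<inter> {a<..<b}" for x
      using that assms
      by (auto elim!: arbitrarily_short_intervals_mono
               simp: emeasure_G_measure_Icc ennreal_mult'[symmetric] divide_less_eq mult.commute
               intro!: ennreal_lessI)
  qed (use B assms in \<open>auto simp: B_def frac_less2\<close>)
  have WB: "W \<inter> B \<in> sets borel" "W \<inter> B \<subseteq> {a..b}"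
    using W B by auto
  have "q * measure lborel (W \<inter> B) \<le> measure G_measure (W \<inter> B)"
    using WB assms by (intro measure_G_measure_ge) (auto simp: B_def)
  also have "\<dots> \<le> measure G_measure W"
    using W WB emeasure_G_measure_bounded_finite[OF W(1,2)]
    by (intro measure_mono_fmeasurable) (auto simp: fmeasurable_def less_top)
  also have "\<dots> \<le> q * \<eta>"
    by (rule W(3))
  finally have "emeasure lborel (W \<inter> B) \<le> ennreal \<eta>"
    using assms emeasure_lborel_Icc_subset_finite[OF WB(2)]
    by (simp add: emeasure_eq_ennreal_measure ennreal_leI)
  moreover have "Z \<inter> {a<..<b} - W \<inter> B = Z \<inter> {a<..<b} - W"
    by (auto simp: B_def Z_def)
  ultimately show ?thesis
    using WB W(4) by (intro exI[of _ "W \<inter> B"]) auto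
qed

lemma negligible_upper_derivate_set:
  assumes "p < q"
  shows "negligible {x. G_density x < p \<and> arbitrarily_short_intervals x (\<lambda>c e. q * (e - c) < G e - G c)}"
proof (cases "0 \<le> p")
  case False
  then have "\<not> G_density x < p" for x
    using G_density_nonneg[of x] by linarith
  then show ?thesis
    by (simp add: Collect_conv_if)
next
  case True
  show ?thesis
    by (rule negligible_if_negligible_on_bounded, rule negligible_if_small_cover,
        rule upper_derivate_set_small_cover[OF True assms])
qed

lemma negligible_lower_derivate_set:
  assumes "p < q"
  shows "negligible {x. q < G_density x \<and> arbitrarily_short_intervals x (\<lambda>c e. G e - G c < p * (e - c))}"
proof (cases "0 < p")
  case False
  have "\<not> arbitrarily_short_intervals x (\<lambda>c e. G e - G c < p * (e - c))" for x
  proof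
    assume "arbitrarily_short_intervals x (\<lambda>c e. G e - G c < p * (e - c))"
    then obtain c e where "c < e" "G e - G c < p * (e - c)"
      unfolding arbitrarily_short_intervals_def by (meson zero_less_one)
    moreover have "p * (e - c) \<le> 0" "G c < G e"
      using False \<open>c < e\<close> by (simp_all add: mult_nonpos_nonneg)
    ultimately show False
      by linarith
  qed
  then show ?thesis
    by simp
next
  case True
  show ?thesis
    by (rule negligible_if_negligible_on_bounded, rule negligible_if_small_cover,
        rule lower_derivate_set_small_cover[OF True assms])
qed

lemma has_real_derivative_G_density_AE: "AE x in lebesgue. (G has_real_derivative G_density x) (at x)"
proof -
  define U where
    "U p q = {x. G_density x < p \<and> arbitrarily_short_intervals x (\<lambda>c e. q * (e - c) < G e - G c)}"
    for p q
  define L where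
    "L p q = {x. q < G_density x \<and> arbitrarily_short_intervals x (\<lambda>c e. G e - G c < p * (e - c))}"
    for p q
  \<comment> \<open>rational bounds make the exceptional set a countable union\<close>
  define N where "N = (\<Union>p\<in>\<rat>. \<Union>q\<in>\<rat> \<inter> {p<..}. U p q \<union> L p q)"
  have "negligible (\<Union>q\<in>\<rat> \<inter> {p<..}. U p q \<union> L p q)" for p
    by (intro negligible_countable_Union countable_image countable_Int1 countable_rat)
       (auto simp: U_def L_def negligible_upper_derivate_set negligible_lower_derivate_set)
  then have "negligible N"
    unfolding N_def by (intro negligible_countable_Union countable_image countable_rat) auto
  moreover have "(G has_real_derivative G_density x) (at x)" if "x \<notin> N" for x
  proof (rule has_real_derivative_if_rational_slope_bounds)
    fix q assume "q \<in> \<rat>" "G_density x < q"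
    then obtain p where "p \<in> \<rat>" "G_density x < p" "p < q"
      using Rats_dense_in_real by blast
    then show "\<not> arbitrarily_short_intervals x (\<lambda>c e. q * (e - c) < G e - G c)"
      using that \<open>q \<in> \<rat>\<close> unfolding N_def U_def by blast
  next
    fix p assume "p \<in> \<rat>" "p < G_density x"
    then obtain q where "q \<in> \<rat>" "p < q" "q < G_density x"
      using Rats_dense_in_real by blast
    then show "\<not> arbitrarily_short_intervals x (\<lambda>c e. G e - G c < p * (e - c))"
      using that \<open>p \<in> \<rat>\<close> unfolding N_def L_def by blast
  qed
  ultimately show ?thesis
    by (intro AE_I'[of N]) (auto simp: negligible_iff_null_sets)
qed

end

lemma Lipschitz_constant_nonneg_interval:
  fixes f :: "real \<Rightarrow> real"
  assumes "a < b" "\<And>x y. x \<in> {a..b} \<Longrightarrow> y \<in> {a..b} \<Longrightarrow> \<bar>f y - f x\<bar> \<le> L * \<bar>y - x\<bar>"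
  shows "0 \<le> L"
proof -
  have "0 \<le> L * (b - a)"
    using assms(1) assms(2)[of a b] by (auto intro: order_trans[OF abs_ge_zero])
  then show ?thesis
    using \<open>a < b\<close> by (simp add: zero_le_mult_iff)
qed

lemma Lipschitz_increasing_bijection_extension:
  fixes f :: "real \<Rightarrow> real"
  assumes "a < b" and mono: "mono_on {a..b} f"
    and lip: "\<And>x y. x \<in> {a..b} \<Longrightarrow> y \<in> {a..b} \<Longrightarrow> \<bar>f y - f x\<bar> \<le> L * \<bar>y - x\<bar>"
  shows "Lipschitz_increasing_bijection (\<lambda>t. f (max a (min b t)) + t) (L + 1)"
    (is "Lipschitz_increasing_bijection ?G _")
proof
  define cl where "cl t = max a (min b t)" for t
  have cl: "cl t \<in> {a..b}" "\<bar>cl y - cl x\<bar> \<le> \<bar>y - x\<bar>" "x \<le> y \<Longrightarrow> cl x \<le> cl y" for x y t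
    using \<open>a < b\<close> by (auto simp: cl_def)
  have "0 \<le> L"
    using \<open>a < b\<close> lip by (rule Lipschitz_constant_nonneg_interval)
  have f_cl_mono: "x \<le> y \<Longrightarrow> f (cl x) \<le> f (cl y)" for x y
    using cl by (intro mono_onD[OF mono]) auto
  then show "strict_mono ?G"
    by (intro strict_monoI) (simp add: cl_def add_mono_thms_linordered_field(4))
  show "\<bar>?G y - ?G x\<bar> \<le> (L + 1) * \<bar>y - x\<bar>" for x y
  proof -
    have "\<bar>f (cl y) - f (cl x)\<bar> \<le> L * \<bar>y - x\<bar>"
      using lip[OF cl(1) cl(1)] mult_left_mono[OF cl(2) \<open>0 \<le> L\<close>] by (meson order_trans)
    moreover have "?G y - ?G x = (f (cl y) - f (cl x)) + (y - x)"
      by (simp add: cl_def)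
    then have "\<bar>?G y - ?G x\<bar> \<le> \<bar>f (cl y) - f (cl x)\<bar> + \<bar>y - x\<bar>"
      by (metis abs_triangle_ineq)
    ultimately show ?thesis
      by (simp add: distrib_right)
  qed
  then have "continuous_on UNIV ?G"
    by (intro lipschitz_on_continuous_on[of "L + 1"] lipschitz_onI)
       (auto simp: dist_real_def \<open>0 \<le> L\<close>)
  have "y \<in> range ?G" for y
  proof -
    have "f a \<le> f (cl t)" "f (cl t) \<le> f b" for t
      using cl(1)[of t] \<open>a < b\<close> by (auto intro!: mono_onD[OF mono])
    moreover have "f a \<le> f b"
      using \<open>a < b\<close> by (auto intro!: mono_onD[OF mono])
    ultimately have "?G (y - f b) \<le> y" "y \<le> ?G (y - f a)" "y - f b \<le> y - f a"
      by (simp_all add: cl_def)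
    then have "\<exists>t. y - f b \<le> t \<and> t \<le> y - f a \<and> ?G t = y"
      using continuous_on_subset[OF \<open>continuous_on UNIV ?G\<close>] by (intro IVT') auto
    then obtain t where "?G t = y"
      by blast
    then show ?thesis
      by (rule range_eqI[OF sym])
  qed
  then show "surj ?G"
    by blast
qed

lemma mono_Lipschitz_derivative_density:
  fixes f :: "real \<Rightarrow> real"
  assumes "a < b" and mono: "mono_on {a..b} f"
    and lip: "\<And>x y. x \<in> {a..b} \<Longrightarrow> y \<in> {a..b} \<Longrightarrow> \<bar>f y - f x\<bar> \<le> L * \<bar>y - x\<bar>"
  obtains h where "h \<in> borel_measurable borel" "\<And>x. 0 \<le> h x" "\<And>x. h x \<le> L"
    "AE x in lebesgue. x \<in> {a<..<b} \<longrightarrow> (f has_real_derivative h x) (at x)"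
    "\<And>c d. a \<le> c \<Longrightarrow> c \<le> d \<Longrightarrow> d \<le> b \<Longrightarrow> (h has_integral (f d - f c)) {c..d}"
proof -
  define G where "G t = f (max a (min b t)) + t" for t
  interpret Lipschitz_increasing_bijection G "L + 1"
    unfolding G_def by (rule Lipschitz_increasing_bijection_extension[OF assms])
  \<comment> \<open>the clamping changes h only on a null set but makes it bounded everywhere\<close>
  define h where "h x = max 0 (min L (G_density x - 1))" for x
  have f_eq: "f t = G t - t" if "t \<in> {a..b}" for t
    using that by (simp add: G_def)
  have h_eq: "(f has_real_derivative G_density x - 1) (at x) \<and> h x = G_density x - 1"
    if "x \<in> {a<..<b}" "(G has_real_derivative G_density x) (at x)" for x
  proof -
    have "((\<lambda>t. G t - t) has_real_derivative G_density x - 1) (at x)"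
      using that(2) by (intro derivative_eq_intros) auto
    then have df: "(f has_real_derivative G_density x - 1) (at x)"
      by (rule has_field_derivative_transform_within_open[of _ _ _ "{a<..<b}"])
         (use that(1) f_eq in auto)
    moreover have "0 \<le> G_density x - 1 \<and> G_density x - 1 \<le> L"
      using df that(1) mono lip by (rule has_real_derivative_mono_Lipschitz_bounds)
    ultimately show ?thesis
      by (simp add: h_def)
  qed
  have AE_eq: "AE x in lebesgue. x \<in> {a<..<b} \<longrightarrow>
      (f has_real_derivative G_density x - 1) (at x) \<and> h x = G_density x - 1"
    using has_real_derivative_G_density_AE by eventually_elim (use h_eq in blast)
  show ?thesis
  proof (rule that)
    show "h \<in> borel_measurable borel"
      unfolding h_def by measurable
    have "0 \<le> L"
      using \<open>a < b\<close> lip by (rule Lipschitz_constant_nonneg_interval)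
    then show "0 \<le> h x" "h x \<le> L" for x
      by (auto simp: h_def)
    show "AE x in lebesgue. x \<in> {a<..<b} \<longrightarrow> (f has_real_derivative h x) (at x)"
      using AE_eq by eventually_elim auto
  next
    fix c d assume cd: "a \<le> c" "c \<le> d" "d \<le> b"
    have "((\<lambda>x. 1) has_integral d - c) {c..d}"
      using has_integral_const_real[of "1::real" c d] cd(2) by simp
    then have "((\<lambda>x. G_density x - 1) has_integral (G d - G c) - (d - c)) {c..d}"
      using G_density_has_integral[OF cd(2)] by (rule has_integral_diff[rotated])
    moreover have "(G d - G c) - (d - c) = f d - f c"
      using cd \<open>a < b\<close> by (simp add: f_eq)
    ultimately have density_int: "((\<lambda>x. G_density x - 1) has_integral f d - f c) {c..d}"
      by simp
    have "negligible ({x. \<not> (x \<in> {a<..<b} \<longrightarrow> h x = G_density x - 1)} \<union> {a, b})"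
      using negligible_AE_exceptions[OF AE_eq] by (auto intro: negligible_subset)
    then show "(h has_integral (f d - f c)) {c..d}"
      by (rule has_integral_spike[OF _ _ density_int]) (use cd in auto)
  qed
qed

section \<open>Lower semilinear diagonals\<close>

lemma S_delta_commute: "S_delta \<delta> x y = S_delta \<delta> y x"
  by (cases x y rule: linorder_cases) (auto simp: S_delta_def)

lemma deriv_S_delta_below: "s < x \<Longrightarrow> deriv (S_delta \<delta> x) s = \<delta> x / x"
proof -
  assume "s < x"
  have "((\<lambda>t. \<delta> x / x * t) has_real_derivative \<delta> x / x) (at s)"
    by (rule DERIV_cmult_Id)
  then have "(S_delta \<delta> x has_real_derivative \<delta> x / x) (at s)"
    by (rule has_field_derivative_transform_within_open[of _ _ _ "{..<x}"])
       (use \<open>s < x\<close> in \<open>auto simp: S_delta_def\<close>)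
  then show ?thesis
    by (rule DERIV_imp_deriv)
qed

lemma deriv_S_delta_above:
  assumes "x < s" "((\<lambda>v. \<delta> v / v) has_real_derivative D) (at s)"
  shows "deriv (S_delta \<delta> x) s = x * D"
proof -
  have "((\<lambda>t. x * (\<delta> t / t)) has_real_derivative x * D) (at s)"
    using assms(2) by (rule DERIV_cmult)
  then have "(S_delta \<delta> x has_real_derivative x * D) (at s)"
    by (rule has_field_derivative_transform_within_open[of _ _ _ "{x<..}"])
       (use \<open>x < s\<close> in \<open>auto simp: S_delta_def\<close>)
  then show ?thesis
    by (rule DERIV_imp_deriv)
qed

lemma AE_lebesgue_not_point: "AE x in lebesgue. x \<noteq> (c::real)"
  by (rule AE_completion[OF AE_lborel_singleton])

locale LSL_diagonal =
  fixes \<delta> :: "real \<Rightarrow> real"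
  assumes LSL: "\<delta> \<in> diagonals_LSL"

begin

definition slope :: "real \<Rightarrow> real" where
  "slope v = \<delta> v / v"

lemma slope_eq: "slope = (\<lambda>v. \<delta> v / v)"
  by (simp add: slope_def fun_eq_iff)

lemma diagonal_bounds: "0 \<le> u \<Longrightarrow> u \<le> 1 \<Longrightarrow> 0 \<le> \<delta> u \<and> \<delta> u \<le> u"
  using LSL by (auto simp: diagonals_LSL_def diagonals_def)

lemma diagonal_one: "\<delta> 1 = 1"
  using LSL by (auto simp: diagonals_LSL_def diagonals_def)

lemma diagonal_Lipschitz:
  "u \<in> {0..1} \<Longrightarrow> v \<in> {0..1} \<Longrightarrow> \<bar>\<delta> v - \<delta> u\<bar> \<le> 2 * \<bar>v - u\<bar>"
  using LSL by (auto simp: diagonals_LSL_def diagonals_def)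

lemma slope_mono: "0 < u \<Longrightarrow> u \<le> v \<Longrightarrow> v \<le> 1 \<Longrightarrow> slope u \<le> slope v"
  using LSL unfolding diagonals_LSL_def slope_def by auto

lemma slope_div_antimono: "0 < u \<Longrightarrow> u \<le> v \<Longrightarrow> v \<le> 1 \<Longrightarrow> slope v / v \<le> slope u / u"
  using LSL unfolding diagonals_LSL_def slope_def by (auto simp: power2_eq_square)

lemma slope_bounds: "0 \<le> u \<Longrightarrow> u \<le> 1 \<Longrightarrow> 0 \<le> slope u \<and> slope u \<le> 1"
  using diagonal_bounds[of u] by (cases "u = 0") (auto simp: slope_def divide_le_eq)

lemma slope_Lipschitz:
  assumes "0 < c" "u \<in> {c..1}" "v \<in> {c..1}"
  shows "\<bar>slope v - slope u\<bar> \<le> 3 / c * \<bar>v - u\<bar>"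
proof -
  have "u > 0" "v > 0"
    using assms by auto
  have "slope v - slope u = (\<delta> v - \<delta> u) / v + \<delta> u * (u - v) / (u * v)"
    using \<open>u > 0\<close> \<open>v > 0\<close> by (simp add: slope_def field_simps)
  then have "\<bar>slope v - slope u\<bar> \<le> \<bar>(\<delta> v - \<delta> u) / v\<bar> + \<bar>\<delta> u * (u - v) / (u * v)\<bar>"
    by (simp only: abs_triangle_ineq)
  moreover have "\<bar>(\<delta> v - \<delta> u) / v\<bar> \<le> 2 * \<bar>v - u\<bar> / v"
    using diagonal_Lipschitz[of u v] assms \<open>v > 0\<close> by (simp add: abs_divide divide_right_mono)
  moreover have "\<bar>\<delta> u * (u - v) / (u * v)\<bar> \<le> \<bar>v - u\<bar> / v"
  proof -
    have "\<bar>\<delta> u * (u - v)\<bar> \<le> u * \<bar>v - u\<bar>"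
      using diagonal_bounds[of u] assms
      by (simp add: abs_mult abs_minus_commute mult_right_mono)
    then have "\<bar>\<delta> u * (u - v)\<bar> / (u * v) \<le> u * \<bar>v - u\<bar> / (u * v)"
      using \<open>u > 0\<close> \<open>v > 0\<close> by (intro divide_right_mono) auto
    then show ?thesis
      using \<open>u > 0\<close> \<open>v > 0\<close> by (simp add: abs_divide)
  qed
  moreover have "2 * \<bar>v - u\<bar> / v + \<bar>v - u\<bar> / v = 3 * \<bar>v - u\<bar> / v"
    by (simp add: add_divide_distrib[symmetric])
  ultimately have "\<bar>slope v - slope u\<bar> \<le> 3 * \<bar>v - u\<bar> / v"
    by linarith
  also have "\<dots> \<le> 3 / c * \<bar>v - u\<bar>"
    using assms by (simp add: divide_left_mono mult.commute mult_imp_div_pos_le)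
  finally show ?thesis .
qed

lemma slope_derivative_density:
  assumes "0 < c" "c < 1"
  obtains h where "h \<in> borel_measurable borel" "\<And>s. 0 \<le> h s" "\<And>s. h s \<le> 3 / c"
    "AE s in lebesgue. s \<in> {c<..<1} \<longrightarrow> (slope has_real_derivative h s) (at s)"
    "\<And>u v. c \<le> u \<Longrightarrow> u \<le> v \<Longrightarrow> v \<le> 1 \<Longrightarrow> (h has_integral (slope v - slope u)) {u..v}"
  by (rule mono_Lipschitz_derivative_density[of c 1 slope "3 / c"])
     (use assms slope_mono slope_Lipschitz in \<open>auto intro!: mono_onI\<close>)

lemma AE_slope_differentiable: "AE s in lebesgue. s \<in> {0<..<1} \<longrightarrow> slope differentiable (at s)"
proof -
  have "AE s in lebesgue. s \<in> {1 / Suc (Suc n)<..<1} \<longrightarrow> slope differentiable (at s)" for n :: nat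
  proof -
    obtain h where
      "AE s in lebesgue. s \<in> {1 / Suc (Suc n)<..<1} \<longrightarrow> (slope has_real_derivative h s) (at s)"
      by (rule slope_derivative_density[of "1 / Suc (Suc n)"]) auto
    then show ?thesis
      by eventually_elim (auto simp: real_differentiable_def)
  qed
  then have "AE s in lebesgue. \<forall>n::nat. s \<in> {1 / Suc (Suc n)<..<1} \<longrightarrow> slope differentiable (at s)"
    by (simp only: AE_all_countable) blast
  then show ?thesis
  proof eventually_elim
    case (elim s)
    show ?case
    proof
      assume s: "s \<in> {0<..<1}"
      obtain n :: nat where "1 / Suc n < s"
        using s reals_Archimedean by (auto simp: inverse_eq_divide)
      moreover have "1 / real (Suc (Suc n)) \<le> 1 / Suc n"
        by (simp add: frac_le)
      ultimately show "slope differentiable (at s)"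
        using elim[THEN spec, of n] s by auto
    qed
  qed
qed

lemma deriv_slope_bounds:
  assumes s: "s \<in> {0<..<1}" and D: "(slope has_real_derivative deriv slope s) (at s)"
  shows "0 \<le> deriv slope s \<and> deriv slope s \<le> slope s / s"
proof -
  have "1 - s > 0"
    using s by simp
  have "((\<lambda>t. slope t / t) has_real_derivative (deriv slope s * s - slope s) / (s * s)) (at s)"
    using D s by (auto intro!: derivative_eq_intros)
  then have "(deriv slope s * s - slope s) / (s * s) \<le> 0"
    by (rule has_real_derivative_nonpos_if_decreasing_right[OF _ \<open>1 - s > 0\<close>])
       (use s in \<open>auto intro!: slope_div_antimono\<close>)
  moreover have "0 < s * s"
    using s by simp
  ultimately have "deriv slope s \<le> slope s / s"
    using s by (auto simp: divide_le_0_iff le_divide_eq)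
  moreover have "0 \<le> deriv slope s"
    by (rule has_real_derivative_nonneg_if_increasing_right[OF D \<open>1 - s > 0\<close>])
       (use s in \<open>auto intro!: slope_mono\<close>)
  ultimately show ?thesis
    by simp
qed

lemma AE_deriv_slope:
  "AE s in lebesgue. s \<in> {0<..<1} \<longrightarrow>
     (slope has_real_derivative deriv slope s) (at s) \<and> 0 \<le> deriv slope s \<and> deriv slope s \<le> slope s / s"
  using AE_slope_differentiable
  by eventually_elim (simp add: DERIV_deriv_iff_real_differentiable deriv_slope_bounds)

lemma deriv_S_delta_AE:
  "AE s in lebesgue. s \<in> {0<..<1} \<longrightarrow> s \<noteq> x \<longrightarrow>
     deriv (S_delta \<delta> x) s = (if s < x then slope x else x * deriv slope s)"
  using AE_deriv_slope
  by eventually_elim (auto simp: deriv_S_delta_below slope_def slope_eq[symmetric]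
                           intro!: deriv_S_delta_above)

lemma deriv_S_delta_mono_AE:
  assumes "0 \<le> x1" "x1 \<le> x2" "x2 \<le> 1"
  shows "AE s in lebesgue. s \<in> {0..1} \<longrightarrow> deriv (S_delta \<delta> x1) s \<le> deriv (S_delta \<delta> x2) s"
  using deriv_S_delta_AE[of x1] deriv_S_delta_AE[of x2] AE_deriv_slope
    AE_lebesgue_not_point[of 0] AE_lebesgue_not_point[of 1] AE_lebesgue_not_point[of x1]
    AE_lebesgue_not_point[of x2]
proof eventually_elim
  case (elim s)
  show ?case
  proof
    assume "s \<in> {0..1}"
    then have s: "0 < s" "s < 1" "s \<noteq> x1" "s \<noteq> x2"
      using elim by auto
    consider "s < x1" | "x1 < s" "s < x2" | "x2 < s"
      using s assms by linarith
    then show "deriv (S_delta \<delta> x1) s \<le> deriv (S_delta \<delta> x2) s"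
    proof cases
      case 1
      then show ?thesis
        using elim s assms by (auto intro!: slope_mono)
    next
      case 2
      have "x1 * deriv slope s \<le> s * deriv slope s"
        using 2 elim s by (intro mult_right_mono) auto
      also have "\<dots> \<le> slope s"
        using elim s by (simp add: le_divide_eq mult.commute)
      also have "\<dots> \<le> slope x2"
        using 2 s assms by (intro slope_mono) auto
      finally show ?thesis
        using 2 elim s by auto
    next
      case 3
      then show ?thesis
        using elim s assms by (auto intro!: mult_right_mono)
    qed
  qed
qed

end

section \<open>The star product of lower semilinear copulas\<close>

lemma bounded_measurable_absolutely_integrable:
  fixes g :: "real \<Rightarrow> real"
  assumes "g \<in> borel_measurable borel" "\<And>s. \<bar>g s\<bar> \<le> K"
  shows "g absolutely_integrable_on {a..b}"
proof (rule measurable_bounded_by_integrable_imp_absolutely_integrable[where g="\<lambda>_. K"])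
  show "g \<in> borel_measurable (lebesgue_on {a..b})"
    using assms(1) by (intro measurable_restrict_space1 measurable_completion) simp
qed (use assms(2) in auto)

lemma lebesgue_integral_eq_integral_AE:
  fixes f g :: "real \<Rightarrow> real"
  assumes g: "g absolutely_integrable_on {a..b}"
    and eq: "AE s in lebesgue. s \<in> {a..b} \<longrightarrow> f s = g s"
  shows "integrable (lebesgue_on {a..b}) f" "(LINT s|lebesgue_on {a..b}. f s) = integral {a..b} g"
proof -
  have N: "negligible {s. \<not> (s \<in> {a..b} \<longrightarrow> f s = g s)}"
    by (rule negligible_AE_exceptions[OF eq])
  have "f absolutely_integrable_on {a..b}"
    by (rule absolutely_integrable_spike[OF g N]) auto
  then show "integrable (lebesgue_on {a..b}) f"
    by (rule absolutely_integrable_imp_integrable) simp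
  then have "(LINT s|lebesgue_on {a..b}. f s) = integral {a..b} f"
    by (rule lebesgue_integral_eq_integral) simp
  also have "\<dots> = integral {a..b} g"
    by (rule integral_spike[OF N]) auto
  finally show "(LINT s|lebesgue_on {a..b}. f s) = integral {a..b} g" .
qed

lemma three_piece_has_integral:
  fixes F h1 h2 :: "real \<Rightarrow> real"
  assumes "0 \<le> x" "x \<le> y" "y \<le> 1"
    and h1: "(h1 has_integral (F y - F x)) {x..y}" and h12: "((\<lambda>s. h1 s * h2 s) has_integral I) {y..1}"
  shows "((\<lambda>s. (if s < x then F x else x * h1 s) * (if s < y then B else y * h2 s))
           has_integral (x * F y * B + x * y * I)) {0..1}"
proof -
  let ?Q = "\<lambda>s. (if s < x then F x else x * h1 s) * (if s < y then B else y * h2 s)"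
  have "((\<lambda>s. F x * B) has_integral x * (F x * B)) {0..x}"
    using has_integral_const_real[of "F x * B" 0 x] assms by simp
  then have "(?Q has_integral x * (F x * B)) {0..x}"
    by (rule has_integral_spike[of "{x}", rotated 2]) (use assms in auto)
  moreover have "(?Q has_integral (F y - F x) * (x * B)) {x..y}"
    by (rule has_integral_spike[of "{x, y}", OF _ _ has_integral_mult_left[OF h1]]) auto
  moreover have "(?Q has_integral I * (x * y)) {y..1}"
    by (rule has_integral_spike[of "{y}", OF _ _ has_integral_mult_left[OF h12]]) (use assms in auto)
  ultimately have "(?Q has_integral x * (F x * B) + (F y - F x) * (x * B) + I * (x * y)) {0..1}"
    using assms by (intro has_integral_combine[of 0 y 1] has_integral_combine[of 0 x y]) auto
  then show ?thesis
    by (simp add: algebra_simps)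
qed

lemma deriv_S_delta_zero: "deriv (S_delta \<delta> 0) s = 0"
proof -
  have "S_delta \<delta> 0 = (\<lambda>_. 0)"
    by (simp add: fun_eq_iff S_delta_def)
  then show ?thesis
    using DERIV_imp_deriv[OF DERIV_const] by simp
qed

lemma S_delta_swap_fun: "(\<lambda>t. S_delta \<delta> t y) = S_delta \<delta> y"
  by (simp add: fun_eq_iff S_delta_commute)

lemma star_S_delta_eq:
  "star (S_delta \<delta>1) (S_delta \<delta>2) x y =
     (LINT s|lebesgue_on {0..1}. deriv (S_delta \<delta>1 x) s * deriv (S_delta \<delta>2 y) s)"
  by (simp add: star_def S_delta_swap_fun)

lemma star_S_delta_swap: "star (S_delta \<delta>1) (S_delta \<delta>2) x y = star (S_delta \<delta>2) (S_delta \<delta>1) y x"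
  by (simp add: star_S_delta_eq mult.commute)

definition slope_product_integral :: "(real \<Rightarrow> real) \<Rightarrow> (real \<Rightarrow> real) \<Rightarrow> real \<Rightarrow> real" where
  "slope_product_integral \<delta>1 \<delta>2 z =
     (LINT u|lebesgue_on {z..1}. deriv (\<lambda>v. \<delta>1 v / v) u * deriv (\<lambda>v. \<delta>2 v / v) u)"

lemma slope_product_integral_one: "slope_product_integral \<delta>1 \<delta>2 1 = 0"
proof -
  have "AE s in lebesgue. s \<in> {1..1} \<longrightarrow>
      deriv (\<lambda>v. \<delta>1 v / v) s * deriv (\<lambda>v. \<delta>2 v / v) s = (\<lambda>_. 0) s"
    using AE_lebesgue_not_point[of 1] by eventually_elim auto
  then show ?thesis
    unfolding slope_product_integral_def by (subst lebesgue_integral_eq_integral_AE(2)) auto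
qed

lemma slope_product_integral_commute: "slope_product_integral \<delta>1 \<delta>2 = slope_product_integral \<delta>2 \<delta>1"
  by (simp add: slope_product_integral_def mult.commute fun_eq_iff)

locale LSL_diagonal_pair = d1: LSL_diagonal \<delta>1 + d2: LSL_diagonal \<delta>2 for \<delta>1 \<delta>2

begin

lemma slope_product_integral_eq_integral:
  assumes "0 < c" "c \<le> z" "z \<le> 1"
    and h1: "h1 \<in> borel_measurable borel" "\<And>s. 0 \<le> h1 s" "\<And>s. h1 s \<le> K"
      "AE s in lebesgue. s \<in> {c<..<1} \<longrightarrow> (d1.slope has_real_derivative h1 s) (at s)"
    and h2: "h2 \<in> borel_measurable borel" "\<And>s. 0 \<le> h2 s" "\<And>s. h2 s \<le> K"
      "AE s in lebesgue. s \<in> {c<..<1} \<longrightarrow> (d2.slope has_real_derivative h2 s) (at s)"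
  shows "(\<lambda>s. h1 s * h2 s) absolutely_integrable_on {z..1}"
    and "slope_product_integral \<delta>1 \<delta>2 z = integral {z..1} (\<lambda>s. h1 s * h2 s)"
proof -
  have "h1 s * h2 s \<le> K * K" for s
    using h1(2,3)[of s] h2(2,3)[of s] by (intro mult_mono) (auto intro: order_trans)
  then show h12: "(\<lambda>s. h1 s * h2 s) absolutely_integrable_on {z..1}"
    using h1(1,2) h2(1,2) by (intro bounded_measurable_absolutely_integrable) auto
  have "AE s in lebesgue. s \<in> {z..1} \<longrightarrow>
      deriv (\<lambda>v. \<delta>1 v / v) s * deriv (\<lambda>v. \<delta>2 v / v) s = h1 s * h2 s"
    using h1(4) h2(4) AE_lebesgue_not_point[of 1] AE_lebesgue_not_point[of z]
    by eventually_elim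
       (use assms(2) in \<open>auto simp: d1.slope_eq[symmetric] d2.slope_eq[symmetric] DERIV_imp_deriv\<close>)
  then show "slope_product_integral \<delta>1 \<delta>2 z = integral {z..1} (\<lambda>s. h1 s * h2 s)"
    unfolding slope_product_integral_def by (rule lebesgue_integral_eq_integral_AE(2)[OF h12])
qed

lemma star_S_delta_le:
  assumes "0 < x" "x \<le> y" "y \<le> 1"
  shows "integrable (lebesgue_on {0..1}) (\<lambda>s. deriv (S_delta \<delta>1 x) s * deriv (S_delta \<delta>2 y) s)"
    and "star (S_delta \<delta>1) (S_delta \<delta>2) x y =
           x / y^2 * \<delta>1 y * \<delta>2 y + x * y * slope_product_integral \<delta>1 \<delta>2 y"
proof -
  define c where "c = x / 2"
  have c: "0 < c" "c < 1" "c < x"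
    using assms by (auto simp: c_def)
  obtain h1 where h1: "h1 \<in> borel_measurable borel" "\<And>s. 0 \<le> h1 s" "\<And>s. h1 s \<le> 3 / c"
      "AE s in lebesgue. s \<in> {c<..<1} \<longrightarrow> (d1.slope has_real_derivative h1 s) (at s)"
      "\<And>u v. c \<le> u \<Longrightarrow> u \<le> v \<Longrightarrow> v \<le> 1 \<Longrightarrow> (h1 has_integral (d1.slope v - d1.slope u)) {u..v}"
    by (rule d1.slope_derivative_density[OF c(1,2)]) blast
  obtain h2 where h2: "h2 \<in> borel_measurable borel" "\<And>s. 0 \<le> h2 s" "\<And>s. h2 s \<le> 3 / c"
      "AE s in lebesgue. s \<in> {c<..<1} \<longrightarrow> (d2.slope has_real_derivative h2 s) (at s)"
    by (rule d2.slope_derivative_density[OF c(1,2)]) blast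
  \<comment> \<open>the integrand, with the derivatives of the slopes replaced by bounded densities\<close>
  define Q where
    "Q s = (if s < x then d1.slope x else x * h1 s) * (if s < y then d2.slope y else y * h2 s)" for s
  have "AE s in lebesgue. s \<in> {0..1} \<longrightarrow>
      deriv (S_delta \<delta>1 x) s * deriv (S_delta \<delta>2 y) s = Q s"
    using d1.deriv_S_delta_AE[of x] d2.deriv_S_delta_AE[of y] h1(4) h2(4)
      AE_lebesgue_not_point[of 0] AE_lebesgue_not_point[of 1] AE_lebesgue_not_point[of x]
      AE_lebesgue_not_point[of y]
    by eventually_elim (use c assms in \<open>auto simp: Q_def DERIV_imp_deriv\<close>)
  moreover have "Q absolutely_integrable_on {0..1}"
  proof (rule bounded_measurable_absolutely_integrable)
    show "Q \<in> borel_measurable borel"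
      unfolding Q_def using h1(1) h2(1) by measurable
    have "\<bar>if s < x then d1.slope x else x * h1 s\<bar> \<le> 1 + 3 / c"
      "\<bar>if s < y then d2.slope y else y * h2 s\<bar> \<le> 1 + 3 / c" for s
      using d1.slope_bounds[of x] d2.slope_bounds[of y] h1(2,3)[of s] h2(2,3)[of s] assms c
      by (auto intro: order_trans[OF mult_left_le_one_le])
    then show "\<bar>Q s\<bar> \<le> (1 + 3 / c) * (1 + 3 / c)" for s
      unfolding Q_def abs_mult using c by (intro mult_mono) auto
  qed
  ultimately have star_Q:
      "integrable (lebesgue_on {0..1}) (\<lambda>s. deriv (S_delta \<delta>1 x) s * deriv (S_delta \<delta>2 y) s)"
      "star (S_delta \<delta>1) (S_delta \<delta>2) x y = integral {0..1} Q"
    by (simp_all add: star_S_delta_eq lebesgue_integral_eq_integral_AE)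
  then show "integrable (lebesgue_on {0..1}) (\<lambda>s. deriv (S_delta \<delta>1 x) s * deriv (S_delta \<delta>2 y) s)"
    by simp
  have "c \<le> y"
    using c assms by simp
  note h12 = slope_product_integral_eq_integral[OF c(1) this assms(3) h1(1-4) h2]
  moreover have
    "(Q has_integral (x * d1.slope y * d2.slope y + x * y * integral {y..1} (\<lambda>s. h1 s * h2 s))) {0..1}"
    unfolding Q_def using assms h1(5)[of x y] c h12(1)
    by (intro three_piece_has_integral)
       (auto intro: integrable_integral set_lebesgue_integral_eq_integral)
  ultimately show "star (S_delta \<delta>1) (S_delta \<delta>2) x y =
           x / y^2 * \<delta>1 y * \<delta>2 y + x * y * slope_product_integral \<delta>1 \<delta>2 y"
    using star_Q(2) h12(2) assms
    by (simp add: integral_unique d1.slope_def d2.slope_def power2_eq_square)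
qed

lemma star_S_delta_integrable:
  assumes "x \<in> {0..1}" "y \<in> {0..1}"
  shows "integrable (lebesgue_on {0..1}) (\<lambda>s. deriv (S_delta \<delta>1 x) s * deriv (S_delta \<delta>2 y) s)"
proof -
  interpret swapped: LSL_diagonal_pair \<delta>2 \<delta>1 ..
  consider "x = 0 \<or> y = 0" | "0 < x" "x \<le> y" | "0 < y" "y \<le> x"
    using assms by fastforce
  then show ?thesis
  proof cases
    case 1
    then show ?thesis
      by (auto simp: deriv_S_delta_zero)
  next
    case 2
    then show ?thesis
      using assms by (intro star_S_delta_le(1)) auto
  next
    case 3
    then show ?thesis
      using assms swapped.star_S_delta_le(1)[of y x] by (simp add: mult.commute)
  qed
qed

lemma star_S_delta_formula:
  assumes "x \<in> {0..1}" "y \<in> {0..1}"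
  shows "star (S_delta \<delta>1) (S_delta \<delta>2) x y =
    (if x < y then x / y^2 * \<delta>1 y * \<delta>2 y + x * y * slope_product_integral \<delta>1 \<delta>2 y
     else y / x^2 * \<delta>1 x * \<delta>2 x + x * y * slope_product_integral \<delta>1 \<delta>2 x)"
proof -
  interpret swapped: LSL_diagonal_pair \<delta>2 \<delta>1 ..
  consider "x = 0 \<or> y = 0" | "0 < x" "x < y" | "0 < y" "y \<le> x"
    using assms by fastforce
  then show ?thesis
  proof cases
    case 1
    then show ?thesis
      by (auto simp: star_S_delta_eq deriv_S_delta_zero)
  next
    case 2
    then show ?thesis
      using assms star_S_delta_le(2)[of x y] by simp
  next
    case 3
    then show ?thesis
      using assms swapped.star_S_delta_le(2)[of y x]
      by (simp add: star_S_delta_swap[of \<delta>1] slope_product_integral_commute[of \<delta>2] algebra_simps)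
  qed
qed

lemma star_S_delta_2_increasing:
  assumes "x1 \<in> {0..1}" "x2 \<in> {0..1}" "y1 \<in> {0..1}" "y2 \<in> {0..1}" "x1 \<le> x2" "y1 \<le> y2"
  shows "0 \<le> star (S_delta \<delta>1) (S_delta \<delta>2) x2 y2 - star (S_delta \<delta>1) (S_delta \<delta>2) x2 y1
              - star (S_delta \<delta>1) (S_delta \<delta>2) x1 y2 + star (S_delta \<delta>1) (S_delta \<delta>2) x1 y1"
proof -
  let ?A = "\<lambda>x. deriv (S_delta \<delta>1 x)" and ?B = "\<lambda>y. deriv (S_delta \<delta>2 y)"
  have "AE s in lebesgue_on {0..1}. 0 \<le> (?A x2 s - ?A x1 s) * (?B y2 s - ?B y1 s)"
    using d1.deriv_S_delta_mono_AE[of x1 x2] d2.deriv_S_delta_mono_AE[of y1 y2] assms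
    by (subst AE_restrict_space_iff) (auto elim!: eventually_rev_mp)
  then have "0 \<le> (LINT s|lebesgue_on {0..1}. (?A x2 s - ?A x1 s) * (?B y2 s - ?B y1 s))"
    by (rule integral_nonneg_AE)
  also have "\<dots> = (LINT s|lebesgue_on {0..1}. ?A x2 s * ?B y2 s - ?A x2 s * ?B y1 s
                                             - ?A x1 s * ?B y2 s + ?A x1 s * ?B y1 s)"
    by (simp add: algebra_simps)
  finally show ?thesis
    using assms by (simp add: star_S_delta_eq star_S_delta_integrable)
qed

lemma star_S_delta_is_copula: "is_copula (star (S_delta \<delta>1) (S_delta \<delta>2))"
  unfolding is_copula_def
proof (intro conjI ballI impI)
  fix t :: real assume "t \<in> {0..1}"
  then show "star (S_delta \<delta>1) (S_delta \<delta>2) 0 t = 0" "star (S_delta \<delta>1) (S_delta \<delta>2) t 0 = 0"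
      "star (S_delta \<delta>1) (S_delta \<delta>2) 1 t = t" "star (S_delta \<delta>1) (S_delta \<delta>2) t 1 = t"
    by (auto simp: star_S_delta_formula d1.diagonal_one d2.diagonal_one slope_product_integral_one)
qed (rule star_S_delta_2_increasing)

lemma star_S_delta_is_LSL: "is_LSL (star (S_delta \<delta>1) (S_delta \<delta>2))"
  unfolding is_LSL_def
proof (intro ballI conjI)
  fix x :: real assume x: "x \<in> {0<..1}"
  define a where "a = \<delta>1 x * \<delta>2 x / x^2 + x * slope_product_integral \<delta>1 \<delta>2 x"
  have "star (S_delta \<delta>1) (S_delta \<delta>2) t x = a * t + 0" if "t \<in> {0..x}" for t
    using that x by (cases "t = x") (auto simp: star_S_delta_formula a_def field_simps power2_eq_square)
  then show "\<exists>a b. \<forall>t\<in>{0..x}. star (S_delta \<delta>1) (S_delta \<delta>2) t x = a * t + b"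
    by blast
  have "star (S_delta \<delta>1) (S_delta \<delta>2) x t = a * t + 0" if "t \<in> {0..x}" for t
    using that x by (auto simp: star_S_delta_formula a_def field_simps power2_eq_square)
  then show "\<exists>a b. \<forall>t\<in>{0..x}. star (S_delta \<delta>1) (S_delta \<delta>2) x t = a * t + b"
    by blast
qed

end

theorem mainTheorem1:
  assumes "\<delta>1 \<in> diagonals_LSL" and "\<delta>2 \<in> diagonals_LSL"
  shows "(\<forall>x\<in>{0..1::real}. \<forall>y\<in>{0..1::real}.
            star (S_delta \<delta>1) (S_delta \<delta>2) x y =
              (if x < y then
                 x / y^2 * \<delta>1 y * \<delta>2 y +
                 x * y * (LINT u|lebesgue_on {y..1}. deriv (\<lambda>v. \<delta>1 v / v) u * deriv (\<lambda>v. \<delta>2 v / v) u)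
               else
                 y / x^2 * \<delta>1 x * \<delta>2 x +
                 x * y * (LINT u|lebesgue_on {x..1}. deriv (\<lambda>v. \<delta>1 v / v) u * deriv (\<lambda>v. \<delta>2 v / v) u)))
         \<and> star (S_delta \<delta>1) (S_delta \<delta>2) \<in> copulas_LSL"
proof -
  interpret LSL_diagonal_pair \<delta>1 \<delta>2
    using assms by (simp add: LSL_diagonal_pair_def LSL_diagonal_def)
  show ?thesis
    using star_S_delta_formula star_S_delta_is_copula star_S_delta_is_LSL
    by (simp add: copulas_LSL_def slope_product_integral_def)
qed

end
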